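(* Let $X$ be a Banach space and $A:D(A)\to X$ the infinitesimal generator of a $C_0$-semigroup $T(\cdot)$ on $X$; consider $\dot x=Ax$ with (mild) solutions $\phi(t,x)=T(t)x$, regarded as a system without disturbances. The following are equivalent: (i) $T$ is exponentially stable; (ii) $\{0\}$ is UGAS; (iii) $\{0\}$ is uniformly globally attractive; (iv) $\{0\}$ is uniformly globally weakly attractive; (v) there is a non-coercive Lyapunov function for $\dot x=Ax$ (with respect to $\{0\}$).
   Context: $\mathbb R_+=[0,\infty)$. $T$ is exponentially stable if there are $M,\lambda>0$ with $\|T(t)\|\le Me^{-\lambda t}$ for all $t\ge0$. $\mathcal K$: continuous strictly increasing $\gamma:\mathbb R_+\to\mathbb R_+$ with $\gamma(0)=0$; $\mathcal K_\infty$: unbounded elements of $\mathcal K$; $\mathcal{KL}$: continuous $\beta:\mathbb R_+^2\to\mathbb R_+$ with $\beta(\cdot,t)\in\mathcal K$ for each $t$ and $\beta(r,\cdot)$ strictly decreasing to $0$ for each $r>0$. $\{0\}$ is UGAS if there is $\beta\in\mathcal{KL}$ with $\|T(t)x\|\le\beta(\|x\|,t)$ for all $x\in X,t\ge0$. $\{0\}$ is uniformly globally attractive if for all $r,\varepsilon>0$ there is $\tau$ with $\|T(t)x\|\le\varepsilon$ whenever $\|x\|\le r$, $t\ge\tau$. $\{0\}$ is uniformly globally weakly attractive if for all $\varepsilon,r>0$ there is $\tau$ such that for every $x$ with $\|x\|\le r$ there is $t\le\tau$ with $\|T(t)x\|\le\varepsilon$. A non-coercive Lyapunov function is a continuous $V:X\to\mathbb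 R_+$ with $V(0)=0$, for which there are $\psi_2\in\mathcal K_\infty$, $\alpha\in\mathcal K$ with $0<V(x)\le\psi_2(\|x\|)$ and $\liminf_{t\to0^+}\frac1t(V(T(t)x)-V(x))\le-\alpha(\|x\|)$ for all $x\ne0$. *)

theory Defs
  imports "HOL-Analysis.Analysis"
begin

text \<open>Strongly continuous (C_0) semigroup of bounded linear operators on a Banach space,
  indexed by t \<in> [0,\<infinity>). Values of T at negative times are irrelevant.\<close>
definition c0_semigroup :: "(real \<Rightarrow> ('a::banach \<Rightarrow>\<^sub>L 'a)) \<Rightarrow> bool" where
  "c0_semigroup T \<longleftrightarrow>
     T 0 = id_blinfun \<and>
     (\<forall>t s. t \<ge> 0 \<longrightarrow> s \<ge> 0 \<longrightarrow> T (t + s) = T t o\<^sub>L T s) \<and>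
     (\<forall>x. ((\<lambda>t. blinfun_apply (T t) x) \<longlongrightarrow> x) (at_right 0))"

definition exp_stable :: "(real \<Rightarrow> ('a::banach \<Rightarrow>\<^sub>L 'a)) \<Rightarrow> bool" where
  "exp_stable T \<longleftrightarrow>
     (\<exists>M l. M > 0 \<and> l > 0 \<and> (\<forall>t\<ge>0. norm (T t) \<le> M * exp (- l * t)))"

definition class_K :: "(real \<Rightarrow> real) \<Rightarrow> bool" where
  "class_K \<gamma> \<longleftrightarrow> continuous_on {0..} \<gamma> \<and> strict_mono_on {0..} \<gamma> \<and> \<gamma> 0 = 0"

definition class_Kinf :: "(real \<Rightarrow> real) \<Rightarrow> bool" where
  "class_Kinf \<gamma> \<longleftrightarrow> class_K \<gamma> \<and> \<not> bounded (\<gamma> ` {0..})"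

definition class_KL :: "(real \<Rightarrow> real \<Rightarrow> real) \<Rightarrow> bool" where
  "class_KL \<beta> \<longleftrightarrow>
     continuous_on ({0..} \<times> {0..}) (\<lambda>(r, t). \<beta> r t) \<and>
     (\<forall>t\<ge>0. class_K (\<lambda>r. \<beta> r t)) \<and>
     (\<forall>r>0. strict_antimono_on {0..} (\<beta> r) \<and> (\<beta> r \<longlongrightarrow> 0) at_top)"

definition UGAS :: "(real \<Rightarrow> ('a::banach \<Rightarrow>\<^sub>L 'a)) \<Rightarrow> bool" where
  "UGAS T \<longleftrightarrow> (\<exists>\<beta>. class_KL \<beta> \<and>
     (\<forall>x t. t \<ge> 0 \<longrightarrow> norm (T t x) \<le> \<beta> (norm x) t))"

definition unif_glob_attractive :: "(real \<Rightarrow> ('a::banach \<Rightarrow>\<^sub>L 'a)) \<Rightarrow> bool" where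
  "unif_glob_attractive T \<longleftrightarrow> (\<forall>r>0. \<forall>\<epsilon>>0. \<exists>\<tau>\<ge>0.
     \<forall>x t. norm x \<le> r \<longrightarrow> t \<ge> \<tau> \<longrightarrow> norm (T t x) \<le> \<epsilon>)"

definition unif_glob_weakly_attractive :: "(real \<Rightarrow> ('a::banach \<Rightarrow>\<^sub>L 'a)) \<Rightarrow> bool" where
  "unif_glob_weakly_attractive T \<longleftrightarrow> (\<forall>\<epsilon>>0. \<forall>r>0. \<exists>\<tau>\<ge>0.
     \<forall>x. norm x \<le> r \<longrightarrow> (\<exists>t. 0 \<le> t \<and> t \<le> \<tau> \<and> norm (T t x) \<le> \<epsilon>))"

text \<open>Non-coercive Lyapunov function for x' = Ax (solutions T(t)x) w.r.t. {0};
  the lower Dini derivative is taken in the extended reals.\<close>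
definition noncoercive_lyapunov ::
    "(real \<Rightarrow> ('a::banach \<Rightarrow>\<^sub>L 'a)) \<Rightarrow> ('a \<Rightarrow> real) \<Rightarrow> bool" where
  "noncoercive_lyapunov T V \<longleftrightarrow>
     continuous_on UNIV V \<and> (\<forall>x. V x \<ge> 0) \<and> V 0 = 0 \<and>
     (\<exists>\<psi>2 \<alpha>. class_Kinf \<psi>2 \<and> class_K \<alpha> \<and>
        (\<forall>x. x \<noteq> 0 \<longrightarrow>
           0 < V x \<and> V x \<le> \<psi>2 (norm x) \<and>
           Liminf (at_right 0) (\<lambda>t. ereal ((V (T t x) - V x) / t)) \<le> ereal (- \<alpha> (norm x))))"

end

theory Submission
  imports Defs "HOL-Real_Asymp.Real_Asymp"
begin

text \<open>
  Exponential stability trivially gives the KL estimate, uniform attractivity and weak attractivity.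
  Conversely, by the uniform boundedness principle T is bounded on compact time intervals; weak
  attractivity then lets every orbit return, after a time in a fixed bounded window, to the ball of
  its initial norm, so T is bounded, and a second use of weak attractivity yields a single time
  t0 with norm (T t0) <= 1/2, whence exponential decay by the semigroup law.
  For an exponentially stable semigroup, V x = sup (t >= 0) of exp (l t) norm (T t x) is a Lyapunov
  function, shrinking by the factor exp (-l h) along orbits. Conversely, a non-coercive Lyapunov
  function decreases at rate at least alpha e while the orbit stays outside the e-ball, and it starts
  below psi2 r, so every orbit from the r-ball enters the e-ball within time about psi2 r / alpha e.
\<close>

lemma Baire_uniformly_bounded_on_ball:
  fixes F :: "('a::banach \<Rightarrow>\<^sub>L 'b::real_normed_vector) set"
  assumes "\<And>x. bdd_above ((\<lambda>f. norm (blinfun_apply f x)) ` F)"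
  obtains y d c where "d > 0" "\<And>f z. f \<in> F \<Longrightarrow> z \<in> ball y d \<Longrightarrow> norm (f z) \<le> c"
proof -
  define C where "C n = {x. \<forall>f\<in>F. norm (f x) \<le> real n}" for n :: nat
  have closed: "closed (C n)" for n
  proof -
    have "C n = (\<Inter>f\<in>F. {x. norm (blinfun_apply f x) \<le> real n})"
      by (auto simp: C_def)
    also have "closed \<dots>"
      by (intro closed_INT ballI closed_Collect_le continuous_intros)
    finally show ?thesis .
  qed
  have cover: "(\<Union>n. C n) = UNIV"
  proof safe
    fix x :: 'a
    obtain b where "\<And>f. f \<in> F \<Longrightarrow> norm (f x) \<le> b"
      using assms[of x] by (auto simp: bdd_above_def)
    moreover obtain n where "b \<le> real n"
      using real_arch_simple by blast
    ultimately have "x \<in> C n"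
      by (force simp: C_def)
    then show "x \<in> (\<Union>n. C n)"
      by blast
  qed simp
  have "\<exists>n. interior (C n) \<noteq> {}"
  proof (rule ccontr)
    assume "\<nexists>n. interior (C n) \<noteq> {}"
    then have "euclidean interior_of \<Union>(range C) = {}"
      by (intro Baire_category_alt)
        (auto simp: completely_metrizable_space_euclidean closed closed_closedin[symmetric])
    then show False
      using cover by simp
  qed
  then obtain n y where "y \<in> interior (C n)"
    by blast
  then obtain d where "d > 0" "ball y d \<subseteq> C n"
    by (meson open_contains_ball interior_subset open_interior subset_trans)
  then show ?thesis
    by (intro that[of d y "real n"]) (auto simp: C_def)
qed

lemma norm_blinfun_le_if_bounded_on_ball:
  fixes f :: "'a::real_normed_vector \<Rightarrow>\<^sub>L 'b::real_normed_vector"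
  assumes d: "d > 0" and bound: "\<And>z. z \<in> ball y d \<Longrightarrow> norm (f z) \<le> c"
  shows "norm f \<le> 4 * c / d"
proof -
  have small: "norm (f z) \<le> 2 * c" if "norm z < d" for z
  proof -
    have "f z = f (y + z) - f y"
      by (simp add: blinfun.add_right)
    moreover have "norm (f (y + z)) \<le> c" "norm (f y) \<le> c"
      using bound d that by (auto simp: dist_norm)
    ultimately show ?thesis
      by (metis norm_triangle_ineq4 order_trans add_mono mult_2)
  qed
  have c: "c \<ge> 0"
    using small[of 0] d by simp
  show ?thesis
  proof (rule norm_blinfun_bound)
    fix w :: 'a
    show "norm (f w) \<le> 4 * c / d * norm w"
    proof (cases "w = 0")
      case False
      define s where "s = d / (2 * norm w)"
      have s: "s > 0" "norm (s *\<^sub>R w) < d"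
        using d False by (simp_all add: s_def)
      then have "s * norm (f w) \<le> 2 * c"
        using small[of "s *\<^sub>R w"] by (simp add: blinfun.scaleR_right)
      then have "norm (f w) \<le> 2 * c / s"
        using s by (simp add: field_simps)
      also have "\<dots> = 4 * c / d * norm w"
        using d False by (simp add: s_def field_simps)
      finally show ?thesis .
    qed simp
  qed (use c d in simp)
qed

theorem uniform_boundedness_blinfun:
  fixes F :: "('a::banach \<Rightarrow>\<^sub>L 'b::real_normed_vector) set"
  assumes "\<And>x. bdd_above ((\<lambda>f. norm (blinfun_apply f x)) ` F)"
  shows "\<exists>B. \<forall>f\<in>F. norm f \<le> B"
  using Baire_uniformly_bounded_on_ball[OF assms] norm_blinfun_le_if_bounded_on_ball by metis

lemma c0_semigroup_zero: "c0_semigroup T \<Longrightarrow> T 0 = id_blinfun"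
  by (simp add: c0_semigroup_def)

lemma c0_semigroup_add:
  "c0_semigroup T \<Longrightarrow> 0 \<le> t \<Longrightarrow> 0 \<le> s \<Longrightarrow> T (t + s) = T t o\<^sub>L T s"
  by (simp add: c0_semigroup_def)

lemma c0_semigroup_add_apply:
  "c0_semigroup T \<Longrightarrow> 0 \<le> t \<Longrightarrow> 0 \<le> s \<Longrightarrow> T (t + s) x = T t (T s x)"
  by (simp add: c0_semigroup_add)

lemma c0_semigroup_near_identity:
  assumes "c0_semigroup T" "e > 0"
  obtains d where "d > 0" "\<And>h. 0 \<le> h \<Longrightarrow> h < d \<Longrightarrow> norm (T h x - x) < e"
proof -
  have "\<forall>\<^sub>F h in at_right 0. dist (T h x) x < e"
    using assms unfolding c0_semigroup_def tendsto_iff by blast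
  then obtain d where "d > 0" "\<And>h. 0 < h \<Longrightarrow> h < d \<Longrightarrow> norm (T h x - x) < e"
    by (auto simp: eventually_at_right_field dist_norm)
  moreover have "norm (T 0 x - x) < e"
    using assms by (simp add: c0_semigroup_zero)
  ultimately show ?thesis
    by (metis order_le_less that)
qed

lemma c0_semigroup_LIMSEQ_identity:
  assumes c0: "c0_semigroup T" and "\<And>n. 0 \<le> t n" and "t \<longlonglongrightarrow> 0"
  shows "(\<lambda>n. T (t n) x) \<longlonglongrightarrow> x"
proof (rule tendstoI)
  fix e :: real assume "e > 0"
  then obtain d where "d > 0" "\<And>h. 0 \<le> h \<Longrightarrow> h < d \<Longrightarrow> norm (T h x - x) < e"
    using c0_semigroup_near_identity[OF c0] by blast
  moreover have "\<forall>\<^sub>F n in sequentially. t n < d"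
    using \<open>t \<longlonglongrightarrow> 0\<close> \<open>d > 0\<close> by (rule order_tendstoD)
  ultimately show "\<forall>\<^sub>F n in sequentially. dist (T (t n) x) x < e"
    using assms(2) by (auto elim!: eventually_mono simp: dist_norm)
qed

lemma c0_semigroup_bounded_near_zero:
  assumes c0: "c0_semigroup T"
  obtains d M where "d > 0" "\<And>t. 0 \<le> t \<Longrightarrow> t \<le> d \<Longrightarrow> norm (T t) \<le> M"
proof (rule ccontr)
  assume "\<not> thesis"
  have "\<exists>t. 0 \<le> t \<and> t \<le> inverse (real (Suc n)) \<and> norm (T t) > real n" for n
  proof (rule ccontr)
    assume "\<nexists>t. 0 \<le> t \<and> t \<le> inverse (real (Suc n)) \<and> norm (T t) > real n"
    then have "\<And>t. 0 \<le> t \<Longrightarrow> t \<le> inverse (real (Suc n)) \<Longrightarrow> norm (T t) \<le> real n"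
      by (meson not_le)
    with that[of "inverse (real (Suc n))" "real n"] \<open>\<not> thesis\<close> show False
      by simp
  qed
  then obtain t where
    t: "\<And>n. 0 \<le> t n" "\<And>n. t n \<le> inverse (real (Suc n))" "\<And>n. norm (T (t n)) > real n"
    by metis
  have "t \<longlonglongrightarrow> 0"
  proof (rule tendsto_sandwich[OF _ _ tendsto_const LIMSEQ_inverse_real_of_nat])
    show "\<forall>\<^sub>F n in sequentially. 0 \<le> t n" "\<forall>\<^sub>F n in sequentially. t n \<le> inverse (real (Suc n))"
      using t(1,2) by simp_all
  qed
  have "bdd_above ((\<lambda>f. norm (blinfun_apply f x)) ` range (\<lambda>n. T (t n)))" for x
  proof -
    have "Bseq (\<lambda>n. T (t n) x)"
      using c0_semigroup_LIMSEQ_identity[OF c0 t(1) \<open>t \<longlonglongrightarrow> 0\<close>]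
      by (blast intro: convergent_imp_Bseq convergentI)
    then obtain B where "\<And>n. norm (T (t n) x) \<le> B"
      by (auto simp: Bseq_def)
    then show ?thesis
      by (auto simp: bdd_above_def)
  qed
  then obtain B where B: "\<And>n. norm (T (t n)) \<le> B"
    using uniform_boundedness_blinfun by blast
  obtain n :: nat where "B < real n"
    using reals_Archimedean2 by blast
  with B[of n] t(3)[of n] show False
    by simp
qed

lemma c0_semigroup_bounded_on_interval:
  assumes c0: "c0_semigroup T"
  obtains K where "K \<ge> 1" "\<And>t. 0 \<le> t \<Longrightarrow> t \<le> \<tau> \<Longrightarrow> norm (T t) \<le> K"
proof -
  obtain d M where d: "d > 0" and M: "\<And>t. 0 \<le> t \<Longrightarrow> t \<le> d \<Longrightarrow> norm (T t) \<le> max M 1"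
    using c0_semigroup_bounded_near_zero[OF c0] by (metis max.coboundedI1)
  define K where "K = max M 1"
  have K: "K \<ge> 1"
    by (simp add: K_def)
  have "norm (T t) \<le> K ^ (n + 1)" if "0 \<le> t" "t \<le> real n * d" for n t
    using that
  proof (induction n arbitrary: t)
    case 0
    then show ?case
      using M d by (simp add: K_def)
  next
    case (Suc n)
    show ?case
    proof (cases "t \<le> d")
      case True
      then have "norm (T t) \<le> K"
        using M Suc.prems by (simp add: K_def)
      also have "K \<le> K ^ (Suc n + 1)"
        using K by (metis le_add2 one_le_power power_increasing power_one_right)
      finally show ?thesis .
    next
      case False
      then have "T t = T d o\<^sub>L T (t - d)"
        using c0_semigroup_add[OF c0, of d "t - d"] d by simp
      then have "norm (T t) \<le> norm (T d) * norm (T (t - d))"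
        by (simp add: norm_blinfun_compose)
      also have "\<dots> \<le> K * K ^ (n + 1)"
        using Suc.IH[of "t - d"] Suc.prems M[of d] d False K
        by (intro mult_mono) (auto simp: K_def algebra_simps)
      finally show ?thesis
        by simp
    qed
  qed
  moreover obtain n :: nat where "\<tau> / d \<le> real n"
    using real_arch_simple by blast
  then have "\<tau> \<le> real n * d"
    using d by (simp add: field_simps)
  ultimately show ?thesis
    using one_le_power[OF K, of "n + 1"] by (intro that[of "K ^ (n + 1)"]) auto
qed

lemma continuous_on_c0_semigroup_orbit:
  assumes c0: "c0_semigroup T"
  shows "continuous_on {0..} (\<lambda>t. T t x)"
  unfolding continuous_on_iff
proof (intro ballI allI impI)
  fix t e :: real assume t: "t \<in> {0..}" and e: "0 < e"
  obtain K where K: "K \<ge> 1" "\<And>s. 0 \<le> s \<Longrightarrow> s \<le> t + 1 \<Longrightarrow> norm (T s) \<le> K"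
    using c0_semigroup_bounded_on_interval[OF c0] by blast
  obtain d where d: "d > 0" "\<And>h. 0 \<le> h \<Longrightarrow> h < d \<Longrightarrow> norm (T h x - x) < e / K"
    using c0_semigroup_near_identity[OF c0, of "e / K"] e K by auto
  have close: "norm (T b x - T a x) < e" if "0 \<le> a" "a \<le> b" "b - a < d" "a \<le> t + 1" for a b
  proof -
    have "T b x - T a x = T a (T (b - a) x - x)"
      using c0_semigroup_add_apply[OF c0, of a "b - a" x] that by (simp add: blinfun.diff_right)
    also have "norm \<dots> \<le> K * norm (T (b - a) x - x)"
      using K that norm_blinfun[of "T a"] by (meson mult_right_mono norm_ge_zero order_trans)
    also have "\<dots> < K * (e / K)"
      using d that K by (intro mult_strict_left_mono) auto
    finally show ?thesis
      using K by simp
  qed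
  show "\<exists>d>0. \<forall>s\<in>{0..}. dist s t < d \<longrightarrow> dist (T s x) (T t x) < e"
  proof (intro exI[of _ "min d 1"] conjI ballI impI)
    fix s :: real assume s: "s \<in> {0..}" "dist s t < min d 1"
    show "dist (T s x) (T t x) < e"
      using close[of t s] close[of s t] s t
      by (cases "t \<le> s") (auto simp: dist_norm norm_minus_commute)
  qed (use d in auto)
qed

lemma class_K_mono: "class_K \<gamma> \<Longrightarrow> 0 \<le> r \<Longrightarrow> r \<le> s \<Longrightarrow> \<gamma> r \<le> \<gamma> s"
  unfolding class_K_def by (auto intro: strict_mono_on_leD)

lemma class_K_pos: "class_K \<gamma> \<Longrightarrow> 0 < r \<Longrightarrow> 0 < \<gamma> r"
  unfolding class_K_def by (metis atLeast_iff order_refl less_imp_le strict_mono_onD)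

lemma class_K_linear: "0 < c \<Longrightarrow> class_K (\<lambda>r. c * r)"
  unfolding class_K_def by (auto intro!: continuous_intros strict_mono_onI)

lemma class_Kinf_linear: "0 < c \<Longrightarrow> class_Kinf (\<lambda>r. c * r)"
  unfolding class_Kinf_def
proof (intro conjI class_K_linear notI)
  assume "0 < c" "bounded ((\<lambda>r. c * r) ` {0..})"
  then obtain B where "\<And>r. 0 \<le> r \<Longrightarrow> \<bar>c * r\<bar> \<le> B"
    by (auto simp: bounded_iff)
  from this[of "(\<bar>B\<bar> + 1) / c"] \<open>0 < c\<close> show False
    by simp
qed

lemma exp_stable_imp_UGAS:
  assumes "exp_stable T"
  shows "UGAS T"
proof -
  obtain M l where M: "M > 0" "l > 0" "\<And>t. t \<ge> 0 \<Longrightarrow> norm (T t) \<le> M * exp (- l * t)"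
    using assms unfolding exp_stable_def by blast
  define \<beta> where "\<beta> r t = M * exp (- l * t) * r" for r t
  have "class_KL \<beta>"
    unfolding class_KL_def
  proof (intro conjI allI impI)
    show "continuous_on ({0..} \<times> {0..}) (\<lambda>(r, t). \<beta> r t)"
      unfolding \<beta>_def split_def by (intro continuous_intros)
    show "class_K (\<lambda>r. \<beta> r t)" for t
      unfolding \<beta>_def using M by (intro class_K_linear) simp
    fix r :: real assume "r > 0"
    then show "strict_antimono_on {0..} (\<beta> r)"
      using M by (intro monotone_onI) (simp add: \<beta>_def)
    show "(\<beta> r \<longlongrightarrow> 0) at_top"
      unfolding \<beta>_def using M by real_asymp
  qed
  moreover have "norm (T t x) \<le> \<beta> (norm x) t" if "t \<ge> 0" for x t
    using norm_blinfun[of "T t" x] M(3)[OF that] unfolding \<beta>_def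
    by (meson mult_right_mono norm_ge_zero order_trans)
  ultimately show ?thesis
    unfolding UGAS_def by blast
qed

lemma UGAS_imp_unif_glob_attractive:
  assumes "UGAS T"
  shows "unif_glob_attractive T"
  unfolding unif_glob_attractive_def
proof (intro allI impI)
  fix r e :: real assume "r > 0" "e > 0"
  obtain \<beta> where KL: "class_KL \<beta>" and \<beta>: "\<And>x t. t \<ge> 0 \<Longrightarrow> norm (T t x) \<le> \<beta> (norm x) t"
    using assms unfolding UGAS_def by blast
  have "\<forall>\<^sub>F t in at_top. \<beta> r t < e"
    using KL \<open>r > 0\<close> \<open>e > 0\<close> unfolding class_KL_def by (metis order_tendstoD(2))
  then obtain N where N: "\<And>t. t \<ge> N \<Longrightarrow> \<beta> r t < e"
    by (auto simp: eventually_at_top_linorder)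
  have "norm (T t x) \<le> e" if "norm x \<le> r" "max N 0 \<le> t" for x t
  proof -
    have "class_K (\<lambda>r. \<beta> r t)"
      using KL that unfolding class_KL_def by simp
    from class_K_mono[OF this norm_ge_zero] that
    have "\<beta> (norm x) t \<le> \<beta> r t"
      by simp
    then show ?thesis
      using \<beta>[of t x] N[of t] that by simp
  qed
  then show "\<exists>\<tau>\<ge>0. \<forall>x t. norm x \<le> r \<longrightarrow> \<tau> \<le> t \<longrightarrow> norm (T t x) \<le> e"
    by (intro exI[of _ "max N 0"]) auto
qed

lemma unif_glob_attractive_imp_weakly_attractive:
  assumes "unif_glob_attractive T"
  shows "unif_glob_weakly_attractive T"
  unfolding unif_glob_weakly_attractive_def
proof (intro allI impI)
  fix e r :: real assume "e > 0" "r > 0"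
  then obtain \<tau> where "\<tau> \<ge> 0" "\<And>x t. norm x \<le> r \<Longrightarrow> \<tau> \<le> t \<Longrightarrow> norm (T t x) \<le> e"
    using assms unfolding unif_glob_attractive_def by blast
  then show "\<exists>\<tau>\<ge>0. \<forall>x. norm x \<le> r \<longrightarrow> (\<exists>t. 0 \<le> t \<and> t \<le> \<tau> \<and> norm (T t x) \<le> e)"
    by (intro exI[of _ \<tau>]) auto
qed

lemma unif_glob_weakly_attractive_relative:
  assumes "unif_glob_weakly_attractive T" "e > 0"
  obtains \<tau> where "\<tau> \<ge> 0" "\<And>x. \<exists>t. 0 \<le> t \<and> t \<le> \<tau> \<and> norm (T t x) \<le> e * norm x"
proof -
  obtain \<tau> where \<tau>: "\<tau> \<ge> 0" "\<And>y. norm y \<le> 1 \<Longrightarrow> \<exists>t. 0 \<le> t \<and> t \<le> \<tau> \<and> norm (T t y) \<le> e"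
    using assms unfolding unif_glob_weakly_attractive_def by (meson zero_less_one)
  have "\<exists>t. 0 \<le> t \<and> t \<le> \<tau> \<and> norm (T t x) \<le> e * norm x" for x
  proof (cases "x = 0")
    case True
    then show ?thesis
      using \<tau>(1) by auto
  next
    case False
    then obtain t where t: "0 \<le> t" "t \<le> \<tau>" "norm (T t (x /\<^sub>R norm x)) \<le> e"
      using \<tau>(2)[of "x /\<^sub>R norm x"] by auto
    have "norm (T t x) = norm x * norm (T t (x /\<^sub>R norm x))"
      using False by (simp add: blinfun.scaleR_right)
    also have "\<dots> \<le> e * norm x"
      using t(3) by (metis mult.commute mult_left_mono norm_ge_zero)
    finally show ?thesis
      using t by blast
  qed
  then show ?thesis
    using \<tau>(1) that by blast
qed

lemma c0_semigroup_bounded_if_returns: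
  assumes c0: "c0_semigroup T" and "a > 0"
    and bound: "\<And>t. 0 \<le> t \<Longrightarrow> t \<le> L \<Longrightarrow> norm (T t) \<le> K"
    and return: "\<And>x. \<exists>s. a \<le> s \<and> s \<le> L \<and> norm (T s x) \<le> norm x"
    and "t \<ge> 0"
  shows "norm (T t) \<le> K"
proof -
  have "L \<ge> 0"
    using return[of 0] \<open>a > 0\<close> by force
  then have "K \<ge> 0"
    using bound[of 0] norm_ge_zero order_trans by blast
  have short: "norm (T t x) \<le> K * norm x" if "0 \<le> t" "t \<le> L" for t x
    using bound[OF that] norm_blinfun[of "T t" x] by (meson mult_right_mono norm_ge_zero order_trans)
  have "norm (T t x) \<le> K * norm x" if "0 \<le> t" "t \<le> real n * a" for n t x
    using that
  proof (induction n arbitrary: t x)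
    case 0
    then show ?case
      using short[of 0] \<open>L \<ge> 0\<close> by simp
  next
    case (Suc n)
    show ?case
    proof (cases "t \<le> L")
      case True
      then show ?thesis
        using short Suc.prems by blast
    next
      case False
      obtain s where s: "a \<le> s" "s \<le> L" "norm (T s x) \<le> norm x"
        using return by blast
      then have "T t x = T (t - s) (T s x)"
        using c0_semigroup_add_apply[OF c0, of "t - s" s x] False \<open>a > 0\<close> by simp
      also have "norm \<dots> \<le> K * norm (T s x)"
        using Suc.IH Suc.prems s False by (simp add: algebra_simps)
      also have "\<dots> \<le> K * norm x"
        using s \<open>K \<ge> 0\<close> by (simp add: mult_left_mono)
      finally show ?thesis .
    qed
  qed
  moreover obtain n :: nat where "t / a \<le> real n"
    using real_arch_simple by blast
  then have "t \<le> real n * a"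
    using \<open>a > 0\<close> by (simp add: field_simps)
  ultimately show ?thesis
    using \<open>t \<ge> 0\<close> \<open>K \<ge> 0\<close> by (intro norm_blinfun_bound) auto
qed

lemma unif_glob_weakly_attractive_c0_semigroup_bounded:
  assumes c0: "c0_semigroup T" and "unif_glob_weakly_attractive T"
  obtains K where "K \<ge> 0" "\<And>t. t \<ge> 0 \<Longrightarrow> norm (T t) \<le> K"
proof -
  obtain c where c: "c \<ge> 1" "\<And>s. 0 \<le> s \<Longrightarrow> s \<le> 1 \<Longrightarrow> norm (T s) \<le> c"
    using c0_semigroup_bounded_on_interval[OF c0] by blast
  obtain \<tau> where \<tau>: "\<tau> \<ge> 0" "\<And>x. \<exists>t. 0 \<le> t \<and> t \<le> \<tau> \<and> norm (T t x) \<le> 1 / c * norm x"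
    using unif_glob_weakly_attractive_relative[OF assms(2), of "1 / c"] c(1) by auto
  obtain K where K: "K \<ge> 1" "\<And>s. 0 \<le> s \<Longrightarrow> s \<le> 1 + \<tau> \<Longrightarrow> norm (T s) \<le> K"
    using c0_semigroup_bounded_on_interval[OF c0] by blast
  have return: "\<exists>s. 1 \<le> s \<and> s \<le> 1 + \<tau> \<and> norm (T s x) \<le> norm x" for x
  proof -
    obtain t where t: "0 \<le> t" "t \<le> \<tau>" "norm (T t x) \<le> 1 / c * norm x"
      using \<tau>(2) by blast
    have "T (1 + t) x = T 1 (T t x)"
      using c0_semigroup_add_apply[OF c0, of 1 t x] t(1) by simp
    then have "norm (T (1 + t) x) \<le> norm (T 1) * norm (T t x)"
      by (simp add: norm_blinfun)
    also have "\<dots> \<le> c * norm (T t x)"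
      using c(2)[of 1] by (simp add: mult_right_mono)
    also have "\<dots> \<le> norm x"
      using t(3) c(1) by (simp add: field_simps)
    finally show ?thesis
      using t by (intro exI[of _ "1 + t"]) auto
  qed
  have "norm (T t) \<le> K" if "t \<ge> 0" for t
    using c0_semigroup_bounded_if_returns[OF c0 zero_less_one K(2) return that] .
  with K(1) show ?thesis
    using that[of K] by simp
qed

lemma c0_semigroup_norm_le_geometric:
  assumes c0: "c0_semigroup T" and "t\<^sub>0 > 0" "q \<ge> 0"
    and bound: "\<And>t. 0 \<le> t \<Longrightarrow> t \<le> t\<^sub>0 \<Longrightarrow> norm (T t) \<le> K" and contr: "norm (T t\<^sub>0) \<le> q"
    and "real n * t\<^sub>0 \<le> t" "t \<le> real (Suc n) * t\<^sub>0"
  shows "norm (T t) \<le> K * q ^ n"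
proof -
  have "0 \<le> K"
    using bound[of 0] \<open>t\<^sub>0 > 0\<close> by (meson norm_ge_zero order_trans less_imp_le order_refl)
  show ?thesis
    using assms(6,7)
  proof (induction n arbitrary: t)
    case 0
    then show ?case
      using bound by simp
  next
    case (Suc n)
    have "t\<^sub>0 \<le> real (Suc n) * t\<^sub>0"
      using \<open>t\<^sub>0 > 0\<close> by simp
    with Suc.prems have "t\<^sub>0 \<le> t"
      by linarith
    then have "T t = T (t - t\<^sub>0) o\<^sub>L T t\<^sub>0"
      using c0_semigroup_add[OF c0, of "t - t\<^sub>0" t\<^sub>0] \<open>t\<^sub>0 > 0\<close> by simp
    then have "norm (T t) \<le> norm (T (t - t\<^sub>0)) * norm (T t\<^sub>0)"
      by (simp add: norm_blinfun_compose)
    also have "\<dots> \<le> K * q ^ n * q"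
      using Suc.IH[of "t - t\<^sub>0"] Suc.prems contr \<open>0 \<le> K\<close> \<open>q \<ge> 0\<close>
      by (intro mult_mono) (simp_all add: algebra_simps)
    finally show ?case
      by (simp add: mult_ac)
  qed
qed

lemma c0_semigroup_exp_stable_if_contraction:
  assumes c0: "c0_semigroup T" and "t\<^sub>0 > 0" "0 < q" "q < 1" and contr: "norm (T t\<^sub>0) \<le> q"
  shows "exp_stable T"
proof -
  obtain K where K: "K \<ge> 1" "\<And>t. 0 \<le> t \<Longrightarrow> t \<le> t\<^sub>0 \<Longrightarrow> norm (T t) \<le> K"
    using c0_semigroup_bounded_on_interval[OF c0] by blast
  have geometric: "norm (T t) \<le> K * q ^ n" if "real n * t\<^sub>0 \<le> t" "t \<le> real (Suc n) * t\<^sub>0" for n t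
    using c0_semigroup_norm_le_geometric[OF c0 \<open>t\<^sub>0 > 0\<close>, of q K n t] K(2) contr that \<open>q > 0\<close>
    by simp
  define l where "l = - ln q / t\<^sub>0"
  have "norm (T t) \<le> K / q * exp (- l * t)" if "t \<ge> 0" for t
  proof -
    define n where "n = nat \<lfloor>t / t\<^sub>0\<rfloor>"
    have "real n = real_of_int \<lfloor>t / t\<^sub>0\<rfloor>"
      using that \<open>t\<^sub>0 > 0\<close> by (simp add: n_def)
    then have "real n \<le> t / t\<^sub>0" "t / t\<^sub>0 \<le> real n + 1"
      using of_int_floor_le[of "t / t\<^sub>0"] real_of_int_floor_add_one_gt[of "t / t\<^sub>0"] by linarith+
    then have n: "real n * t\<^sub>0 \<le> t" "t \<le> real (Suc n) * t\<^sub>0"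
      using \<open>t\<^sub>0 > 0\<close> by (simp_all add: field_simps)
    have "q ^ n = exp (real n * ln q)"
      using \<open>q > 0\<close> by (simp add: exp_of_nat_mult)
    also have "\<dots> \<le> exp ((t / t\<^sub>0 - 1) * ln q)"
    proof -
      have "t / t\<^sub>0 - 1 \<le> real n"
        using n(2) \<open>t\<^sub>0 > 0\<close> by (simp add: field_simps)
      moreover have "ln q \<le> 0"
        using \<open>q > 0\<close> \<open>q < 1\<close> by simp
      ultimately show ?thesis
        by (simp add: mult_right_mono_neg)
    qed
    also have "(t / t\<^sub>0 - 1) * ln q = - l * t - ln q"
      using \<open>t\<^sub>0 > 0\<close> by (simp add: l_def field_simps)
    also have "exp (- l * t - ln q) = exp (- l * t) / q"
      using \<open>q > 0\<close> by (simp add: exp_diff)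
    finally have "K * q ^ n \<le> K * (exp (- l * t) / q)"
      using K(1) by (intro mult_left_mono) simp_all
    then show ?thesis
      using geometric[OF n] by simp
  qed
  moreover have "l > 0" "K / q > 0"
    using \<open>t\<^sub>0 > 0\<close> \<open>0 < q\<close> \<open>q < 1\<close> K(1) by (simp_all add: l_def divide_neg_pos)
  ultimately show ?thesis
    unfolding exp_stable_def by blast
qed

lemma unif_glob_weakly_attractive_imp_exp_stable:
  assumes c0: "c0_semigroup T" and "unif_glob_weakly_attractive T"
  shows "exp_stable T"
proof -
  obtain K where K: "K \<ge> 0" "\<And>t. t \<ge> 0 \<Longrightarrow> norm (T t) \<le> K"
    using unif_glob_weakly_attractive_c0_semigroup_bounded[OF assms] by blast
  obtain \<tau> where \<tau>: "\<tau> \<ge> 0" "\<And>x. \<exists>t. 0 \<le> t \<and> t \<le> \<tau> \<and> norm (T t x) \<le> 1 / (2 * (K + 1)) * norm x"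
    using unif_glob_weakly_attractive_relative[OF assms(2), of "1 / (2 * (K + 1))"] K(1) by auto
  have "norm (T (\<tau> + 1) x) \<le> 1 / 2 * norm x" for x
  proof -
    obtain t where t: "0 \<le> t" "t \<le> \<tau>" "norm (T t x) \<le> 1 / (2 * (K + 1)) * norm x"
      using \<tau>(2) by blast
    have "T (\<tau> + 1) x = T (\<tau> + 1 - t) (T t x)"
      using c0_semigroup_add_apply[OF c0, of "\<tau> + 1 - t" t x] t by simp
    also have "norm \<dots> \<le> norm (T (\<tau> + 1 - t)) * norm (T t x)"
      by (rule norm_blinfun)
    also have "\<dots> \<le> (K + 1) * norm (T t x)"
      using K(2)[of "\<tau> + 1 - t"] t by (simp add: mult_right_mono)
    also have "\<dots> \<le> 1 / 2 * norm x"
      using t(3) K(1) by (simp add: field_simps)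
    finally show ?thesis .
  qed
  then have "norm (T (\<tau> + 1)) \<le> 1 / 2"
    by (intro norm_blinfun_bound) auto
  then show ?thesis
    using \<tau>(1) by (intro c0_semigroup_exp_stable_if_contraction[OF c0, of "\<tau> + 1" "1 / 2"]) auto
qed

lemma Liminf_difference_quotient_le_if_exp_decay:
  fixes \<phi> :: "real \<Rightarrow> real"
  assumes decay: "\<And>h. h > 0 \<Longrightarrow> \<phi> h \<le> exp (- l * h) * \<phi> 0"
  shows "Liminf (at_right 0) (\<lambda>h. ereal ((\<phi> h - \<phi> 0) / h)) \<le> ereal (- l * \<phi> 0)"
proof -
  have "((\<lambda>h. exp (- l * h)) has_field_derivative - l) (at 0 within {0<..})"
    by (auto intro!: derivative_eq_intros)
  then have "((\<lambda>h. (exp (- l * h) - 1) / h) \<longlongrightarrow> - l) (at_right 0)"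
    unfolding has_field_derivative_iff by simp
  then have lim: "((\<lambda>h. ereal ((exp (- l * h) - 1) / h * \<phi> 0)) \<longlongrightarrow> ereal (- l * \<phi> 0)) (at_right 0)"
    by (intro tendsto_ereal tendsto_mult tendsto_const)
  have "\<forall>\<^sub>F h in at_right 0. ereal ((\<phi> h - \<phi> 0) / h) \<le> ereal ((exp (- l * h) - 1) / h * \<phi> 0)"
    unfolding eventually_at_right_field
  proof (intro exI[of _ 1] conjI allI impI)
    fix h :: real assume "0 < h" "h < 1"
    then show "ereal ((\<phi> h - \<phi> 0) / h) \<le> ereal ((exp (- l * h) - 1) / h * \<phi> 0)"
      using decay[of h] by (simp add: divide_right_mono algebra_simps)
  qed simp
  then have "Liminf (at_right 0) (\<lambda>h. ereal ((\<phi> h - \<phi> 0) / h))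
      \<le> Liminf (at_right 0) (\<lambda>h. ereal ((exp (- l * h) - 1) / h * \<phi> 0))"
    by (rule Liminf_mono)
  also have "\<dots> = ereal (- l * \<phi> 0)"
    by (rule lim_imp_Liminf[OF trivial_limit_at_right_real lim])
  finally show ?thesis .
qed

definition weighted_orbit_sup :: "(real \<Rightarrow> ('a::banach \<Rightarrow>\<^sub>L 'a)) \<Rightarrow> real \<Rightarrow> 'a \<Rightarrow> real" where
  "weighted_orbit_sup T l x = (SUP t\<in>{0..}. exp (l * t) * norm (T t x))"

context
  fixes T :: "real \<Rightarrow> ('a::banach \<Rightarrow>\<^sub>L 'a)" and M l :: real
  assumes c0: "c0_semigroup T" and "M > 0" "l > 0"
    and decay: "\<And>t. t \<ge> 0 \<Longrightarrow> norm (T t) \<le> M * exp (- l * t)"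
begin

lemma weighted_orbit_bound: "t \<ge> 0 \<Longrightarrow> exp (l * t) * norm (T t x) \<le> M * norm x"
proof -
  assume "t \<ge> 0"
  have "exp (l * t) * norm (T t x) \<le> exp (l * t) * (M * exp (- l * t) * norm x)"
    using decay[OF \<open>t \<ge> 0\<close>] norm_blinfun[of "T t" x]
    by (intro mult_left_mono) (simp_all add: mult_right_mono order_trans)
  also have "\<dots> = M * norm x"
    by (simp add: exp_minus field_simps)
  finally show ?thesis .
qed

lemma le_weighted_orbit_sup: "t \<ge> 0 \<Longrightarrow> exp (l * t) * norm (T t x) \<le> weighted_orbit_sup T l x"
  unfolding weighted_orbit_sup_def
  by (rule cSUP_upper) (auto intro!: bdd_aboveI2 weighted_orbit_bound)

lemma weighted_orbit_sup_le:
  "(\<And>t. t \<ge> 0 \<Longrightarrow> exp (l * t) * norm (T t x) \<le> B) \<Longrightarrow> weighted_orbit_sup T l x \<le> B"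
  unfolding weighted_orbit_sup_def by (rule cSUP_least) auto

lemma norm_le_weighted_orbit_sup: "norm x \<le> weighted_orbit_sup T l x"
  using le_weighted_orbit_sup[of 0 x] by (simp add: c0_semigroup_zero[OF c0])

lemma weighted_orbit_sup_le_norm: "weighted_orbit_sup T l x \<le> M * norm x"
  by (intro weighted_orbit_sup_le weighted_orbit_bound)

lemma lipschitz_on_weighted_orbit_sup: "M-lipschitz_on UNIV (weighted_orbit_sup T l)"
proof -
  have "weighted_orbit_sup T l x \<le> weighted_orbit_sup T l y + M * norm (x - y)" for x y
  proof (rule weighted_orbit_sup_le)
    fix t :: real assume t: "t \<ge> 0"
    have "norm (T t x) \<le> norm (T t y) + norm (T t (x - y))"
      by (metis add_diff_cancel_left' blinfun.diff_right diff_add_cancel norm_triangle_ineq)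
    then have "exp (l * t) * norm (T t x) \<le> exp (l * t) * norm (T t y) + exp (l * t) * norm (T t (x - y))"
      by (simp add: distrib_left[symmetric])
    also have "\<dots> \<le> weighted_orbit_sup T l y + M * norm (x - y)"
      using le_weighted_orbit_sup[OF t, of y] weighted_orbit_bound[OF t, of "x - y"] by simp
    finally show "exp (l * t) * norm (T t x) \<le> weighted_orbit_sup T l y + M * norm (x - y)" .
  qed
  note le = this
  show ?thesis
  proof (rule lipschitz_onI)
    fix x y :: 'a
    show "dist (weighted_orbit_sup T l x) (weighted_orbit_sup T l y) \<le> M * dist x y"
      using le[of x y] le[of y x] by (simp add: dist_real_def dist_norm norm_minus_commute abs_le_iff)
  qed (use \<open>M > 0\<close> in simp)
qed

lemma weighted_orbit_sup_semigroup:
  assumes "h \<ge> 0"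
  shows "weighted_orbit_sup T l (T h x) \<le> exp (- l * h) * weighted_orbit_sup T l x"
proof (rule weighted_orbit_sup_le)
  fix t :: real assume "t \<ge> 0"
  have "exp (l * t) * norm (T t (T h x)) = exp (- l * h) * (exp (l * (t + h)) * norm (T (t + h) x))"
    using c0_semigroup_add_apply[OF c0 \<open>t \<ge> 0\<close> assms] by (simp add: exp_add[symmetric] algebra_simps)
  also have "\<dots> \<le> exp (- l * h) * weighted_orbit_sup T l x"
    using le_weighted_orbit_sup[of "t + h" x] \<open>t \<ge> 0\<close> assms by simp
  finally show "exp (l * t) * norm (T t (T h x)) \<le> exp (- l * h) * weighted_orbit_sup T l x" .
qed

lemma noncoercive_lyapunov_weighted_orbit_sup: "noncoercive_lyapunov T (weighted_orbit_sup T l)"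
proof -
  let ?V = "weighted_orbit_sup T l"
  have "continuous_on UNIV ?V"
    by (rule lipschitz_on_continuous_on[OF lipschitz_on_weighted_orbit_sup])
  moreover have "0 \<le> ?V x" for x
    using norm_le_weighted_orbit_sup[of x] norm_ge_zero order_trans by blast
  moreover have "?V 0 = 0"
    using norm_le_weighted_orbit_sup[of 0] weighted_orbit_sup_le_norm[of 0] by simp
  moreover have "0 < ?V x" if "x \<noteq> 0" for x
    using norm_le_weighted_orbit_sup[of x] that by (meson zero_less_norm_iff less_le_trans)
  moreover have "Liminf (at_right 0) (\<lambda>h. ereal ((?V (T h x) - ?V x) / h)) \<le> ereal (- (l * norm x))"
    for x
  proof -
    have "Liminf (at_right 0) (\<lambda>h. ereal ((?V (T h x) - ?V x) / h)) \<le> ereal (- l * ?V x)"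
      using Liminf_difference_quotient_le_if_exp_decay[of "\<lambda>h. ?V (T h x)" l]
        weighted_orbit_sup_semigroup by (simp add: c0_semigroup_zero[OF c0])
    also have "\<dots> \<le> ereal (- (l * norm x))"
      using norm_le_weighted_orbit_sup[of x] \<open>l > 0\<close> by simp
    finally show ?thesis .
  qed
  ultimately show ?thesis
    unfolding noncoercive_lyapunov_def
    using weighted_orbit_sup_le_norm class_Kinf_linear[OF \<open>M > 0\<close>] class_K_linear[OF \<open>l > 0\<close>]
    by blast
qed

end

lemma exp_stable_imp_noncoercive_lyapunov:
  assumes "c0_semigroup T" "exp_stable T"
  shows "\<exists>V. noncoercive_lyapunov T V"
  using assms noncoercive_lyapunov_weighted_orbit_sup unfolding exp_stable_def by blast

lemma frequently_less_if_Liminf_less: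
  assumes "Liminf F (\<lambda>x. ereal (f x)) < ereal c"
  shows "\<exists>\<^sub>F x in F. f x < c"
proof -
  obtain y where "y < ereal c" "\<not> (\<forall>\<^sub>F x in F. y < ereal (f x))"
    using assms le_Liminf_iff[of "ereal c" F] by (meson not_le)
  then show ?thesis
    unfolding not_eventually not_less
    by (elim frequently_elim1) (metis less_ereal.simps(1) order.strict_trans1)
qed

lemma decrease_if_frequently_slope_less:
  fixes g :: "real \<Rightarrow> real"
  assumes cont: "continuous_on {0..\<tau>} g" and "\<tau> \<ge> 0"
    and slope: "\<And>t. 0 \<le> t \<Longrightarrow> t < \<tau> \<Longrightarrow> \<exists>\<^sub>F h in at_right 0. (g (t + h) - g t) / h < - c"
  shows "g \<tau> + c * \<tau> \<le> g 0"
proof -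
  define k where "k t = g t + c * t" for t
  define S where "S = {0..\<tau>} \<inter> k -` {..k 0}"
  have "closed S"
    unfolding S_def k_def by (intro continuous_closed_preimage continuous_intros cont closed_atLeastAtMost)
  moreover have "0 \<in> S" "bdd_above S"
    using \<open>\<tau> \<ge> 0\<close> by (auto simp: S_def intro: bdd_aboveI[of _ \<tau>])
  ultimately have sup: "Sup S \<in> S"
    using closed_contains_Sup by blast
  have "Sup S = \<tau>"
  proof (rule ccontr)
    assume "Sup S \<noteq> \<tau>"
    then have s: "0 \<le> Sup S" "Sup S < \<tau>"
      using sup by (auto simp: S_def)
    have "\<forall>\<^sub>F h in at_right 0. 0 < h \<and> h < \<tau> - Sup S"
      using s by (auto simp: eventually_at_right_field intro!: exI[of _ "\<tau> - Sup S"])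
    from frequently_eventually_conj[OF slope[OF s] this]
    obtain h where h: "0 < h" "h < \<tau> - Sup S" "(g (Sup S + h) - g (Sup S)) / h < - c"
      by (auto dest: frequently_ex)
    then have "k (Sup S + h) < k (Sup S)"
      by (simp add: k_def pos_divide_less_eq algebra_simps)
    also have "k (Sup S) \<le> k 0"
      using sup by (simp add: S_def)
    finally have "Sup S + h \<in> S"
      using h s by (simp add: S_def)
    then show False
      using cSup_upper[OF _ \<open>bdd_above S\<close>] h by fastforce
  qed
  then show ?thesis
    using sup by (simp add: S_def k_def)
qed

lemma c0_semigroup_frequently_slope_less:
  assumes c0: "c0_semigroup T" and "0 \<le> t"
    and "Liminf (at_right 0) (\<lambda>h. ereal ((V (T h (T t x)) - V (T t x)) / h)) < ereal c"
  shows "\<exists>\<^sub>F h in at_right 0. (V (T (t + h) x) - V (T t x)) / h < c"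
proof (rule frequently_rev_mp[OF frequently_less_if_Liminf_less[OF assms(3)]])
  have "T (t + h) x = T h (T t x)" if "h > 0" for h
    using c0_semigroup_add_apply[OF c0, of h t x] that \<open>0 \<le> t\<close> by (simp add: add.commute)
  then show "\<forall>\<^sub>F h in at_right 0.
      (V (T h (T t x)) - V (T t x)) / h < c \<longrightarrow> (V (T (t + h) x) - V (T t x)) / h < c"
    unfolding eventually_at_right_field by (auto intro!: exI[of _ 1])
qed

lemma noncoercive_lyapunov_imp_weakly_attractive:
  fixes T :: "real \<Rightarrow> ('a::banach \<Rightarrow>\<^sub>L 'a)"
  assumes c0: "c0_semigroup T" and "noncoercive_lyapunov T V"
  shows "unif_glob_weakly_attractive T"
  unfolding unif_glob_weakly_attractive_def
proof (intro allI impI)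
  fix e r :: real assume "e > 0" "r > 0"
  obtain \<psi> \<alpha> where \<psi>: "class_K \<psi>" and \<alpha>: "class_K \<alpha>" and cont: "continuous_on UNIV V"
    and V: "\<And>x. x \<noteq> 0 \<Longrightarrow> 0 < V x \<and> V x \<le> \<psi> (norm x) \<and>
      Liminf (at_right 0) (\<lambda>t. ereal ((V (T t x) - V x) / t)) \<le> ereal (- \<alpha> (norm x))"
    using assms(2) unfolding noncoercive_lyapunov_def class_Kinf_def by blast
  define A where "A = \<alpha> e"
  have "A > 0"
    using class_K_pos[OF \<alpha> \<open>e > 0\<close>] by (simp add: A_def)
  have "\<psi> r \<ge> 0"
    using class_K_mono[OF \<psi>, of 0 r] \<psi> \<open>r > 0\<close> by (simp add: class_K_def)
  \<comment> \<open>chosen so that V, starting below \<open>\<psi> r\<close> and decreasing at rate A/2 outside the e-ball, would become negative by time \<open>\<tau>\<close>\<close>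
  define \<tau> where "\<tau> = 2 * \<psi> r / A + 1"
  have "\<tau> \<ge> 0"
    using \<open>A > 0\<close> \<open>\<psi> r \<ge> 0\<close> by (simp add: \<tau>_def)
  show "\<exists>\<tau>\<ge>0. \<forall>x. norm x \<le> r \<longrightarrow> (\<exists>t. 0 \<le> t \<and> t \<le> \<tau> \<and> norm (T t x) \<le> e)"
  proof (rule exI[of _ \<tau>], intro conjI allI impI \<open>\<tau> \<ge> 0\<close>)
    fix x :: 'a
    assume "norm x \<le> r"
    show "\<exists>t. 0 \<le> t \<and> t \<le> \<tau> \<and> norm (T t x) \<le> e"
    proof (rule ccontr)
      assume "\<nexists>t. 0 \<le> t \<and> t \<le> \<tau> \<and> norm (T t x) \<le> e"
      then have far: "e < norm (T t x)" if "0 \<le> t" "t \<le> \<tau>" for t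
        using that by force
      define g where "g t = V (T t x)" for t
      have g_cont: "continuous_on {0..\<tau>} g"
        unfolding g_def using continuous_on_c0_semigroup_orbit[OF c0]
        by (rule continuous_on_compose2[OF cont continuous_on_subset]) auto
      have g_slope: "\<exists>\<^sub>F h in at_right 0. (g (t + h) - g t) / h < - (A / 2)" if "0 \<le> t" "t < \<tau>" for t
      proof -
        have "e < norm (T t x)"
          using far that by simp
        then have "Liminf (at_right 0) (\<lambda>h. ereal ((V (T h (T t x)) - V (T t x)) / h)) \<le> ereal (- A)"
          using V[of "T t x"] class_K_mono[OF \<alpha>, of e "norm (T t x)"] \<open>e > 0\<close>
          by (fastforce simp: A_def intro: order_trans)
        also have "\<dots> < ereal (- (A / 2))"
          using \<open>A > 0\<close> by simp
        finally show ?thesis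
          unfolding g_def by (rule c0_semigroup_frequently_slope_less[OF c0 \<open>0 \<le> t\<close>])
      qed
      have "x \<noteq> 0"
        using far[of 0] \<open>\<tau> \<ge> 0\<close> \<open>e > 0\<close> by (auto simp: c0_semigroup_zero[OF c0])
      then have "g 0 \<le> \<psi> r"
        using V[of x] class_K_mono[OF \<psi> norm_ge_zero \<open>norm x \<le> r\<close>]
        by (simp add: g_def c0_semigroup_zero[OF c0])
      moreover have "T \<tau> x \<noteq> 0"
        using far[of \<tau>] \<open>\<tau> \<ge> 0\<close> \<open>e > 0\<close> by auto
      then have "g \<tau> > 0"
        using V by (simp add: g_def)
      moreover have "g \<tau> + A / 2 * \<tau> \<le> g 0"
        using decrease_if_frequently_slope_less[OF g_cont \<open>\<tau> \<ge> 0\<close> g_slope] .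
      moreover have "A / 2 * \<tau> = \<psi> r + A / 2"
        using \<open>A > 0\<close> by (simp add: \<tau>_def field_simps)
      ultimately show False
        using \<open>A > 0\<close> by linarith
    qed
  qed
qed

theorem proposition32:
  fixes T :: "real \<Rightarrow> ('a::banach \<Rightarrow>\<^sub>L 'a)"
  assumes "c0_semigroup T"
  shows "(exp_stable T \<longleftrightarrow> UGAS T) \<and>
         (exp_stable T \<longleftrightarrow> unif_glob_attractive T) \<and>
         (exp_stable T \<longleftrightarrow> unif_glob_weakly_attractive T) \<and>
         (exp_stable T \<longleftrightarrow> (\<exists>V. noncoercive_lyapunov T V))"
  using exp_stable_imp_UGAS UGAS_imp_unif_glob_attractive
    unif_glob_attractive_imp_weakly_attractive
    unif_glob_weakly_attractive_imp_exp_stable[OF assms]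
    exp_stable_imp_noncoercive_lyapunov[OF assms]
    noncoercive_lyapunov_imp_weakly_attractive[OF assms]
  by blast

end
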